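(* Let $G_1=\langle\Sigma_{1,\tau},Q_1,\rightarrow_1,Q_1^0\rangle$ and $G_2=\langle\Sigma_{2,\tau},Q_2,\rightarrow_2,Q_2^0\rangle$ be nondeterministic automata with sets of secret states $Q_1^S$, $Q_2^S$, and equip $G_1\|G_2$ with secret states $Q^S=\{(x_1,x_2)\mid x_1\in Q_1^S\text{ or }x_2\in Q_2^S\}$. Assume $UR(Q_i^0)\not\subseteq Q_i^S$ for $i=1,2$. For $i=1,2$ let $T_i=TPO(det_d(G_i),det(G_i))$ be the largest three-player observer w.r.t. $G_i$, and let $G_i^T$ be the transformed automaton of $T_i$ (with $j\ne i$ the other index). Let $T=TPO(det_d(G_1\|G_2),det(G_1\|G_2))$ be the largest monolithic three-player observer w.r.t. $G_1\|G_2$, and let $\rho$ be the renaming map. Then for every string $s$ over $\Sigma_{G_1^T}\cup\Sigma_{G_2^T}$: if $s$ is defined from the initial state of $G_1^T\|G_2^T$, then $\rho(s)$ labels a path from the initial state of $T$.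
   Context: Automata: a (nondeterministic) automaton $G=\langle\Sigma_\tau,Q,\rightarrow,Q^0\rangle$ has finite observable alphabet $\Sigma$, special unobservable symbol $\tau$, $\Sigma_\tau=\Sigma\cup\{\tau\}$, $\rightarrow\subseteq Q\times\Sigma_\tau\times Q$, initial states $Q^0$. Deterministic: one initial state, no $\tau$-transitions, functional. $p\overset{s}{\Rightarrow}q$ ($s\in\Sigma^*$): a path from $p$ to $q$ whose labels with $\tau$'s deleted spell $s$. $UR(B)=\{q\mid b\overset{\varepsilon}{\Rightarrow}q,\ b\in B\}$. Observer $det(G)$: deterministic over $\Sigma$, initial state $UR(Q^0)$, $X\xrightarrow{\sigma}Y$ iff $Y=UR(\{y\mid x\xrightarrow{\sigma}y,\ x\in X\})\ne\emptyset$, reachable part. Desired observer $det_d(G)$: $det(G)$ with every state $X\subseteq Q^S$ deleted, reachable part kept. Synchronous composition of $A_1$ (alphabet $\Sigma_1$) and $A_2$ (alphabet $\Sigma_2$): state set $Q_1\times Q_2$, initial states $Q_1^0\times Q_2^0$, marked states $Q_1^m\times Q_2^m$ (when marking is present); shared events ($\Sigma_1\cap\Sigma_2$) move both components simultaneously, events in $(\Sigma_1\setminus\Sigma_2)\cup\{\tau\}$ move only the first, events in $(\Sigma_2\setminus\Sigma_1)\cup\{\tau\}$ move only the second. Largest three-player observer $TPO(D,F)$ for deterministic $D=\langle\Sigma,X_D,\rightarrow_D,d_0\rangle$, $F=\langle\Sigma,X_F,\rightarrow_F,f_0\rangle$: with fresh symbol $\epsilon$ and fresh erasure symbols $\Sigma^r=\{\sigma\to\epsilon\mid\sigma\in\Sigma\}$,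 states are $Y$-states $(d,f)$, $Z$-states $Z((d,f),e)$ ($e\in\Sigma$, called the observable component $E$), $W$-states $W((d,f),a)$ ($a\in\Sigma\cup\Sigma^r$, called the action component $A$); initial state $(d_0,f_0)$; only reachable states; transitions exactly: (1) $(d,f)\xrightarrow{e}Z((d,f),e)$ if $e$ defined at $f$ in $F$; (2) $Z((d,f),e)\xrightarrow{\theta}Z((d',f),e)$ for $\theta\in\Sigma$ if $d\xrightarrow{\theta}_Dd'$; (3) $Z((d,f),e)\xrightarrow{\epsilon}W((d,f),e)$ if $e$ defined at $d$ in $D$ and at $f$ in $F$; (4) $Z((d,f),e)\xrightarrow{e\to\epsilon}W((d,f),e\to\epsilon)$ if $e$ defined at $f$ in $F$; (5) $W((d,f),e)\xrightarrow{e}(d',f')$ with $d\xrightarrow{e}_Dd'$, $f\xrightarrow{e}_Ff'$; (6) $W((d,f),e\to\epsilon)\xrightarrow{e}(d,f')$ with $f\xrightarrow{e}_Ff'$. Transformed automaton: for $T_i=TPO(D_i,F_i)$ over alphabet $\Sigma_i$ and the other index $j$, introduce fresh formal symbols $\theta_e$ (for $\theta\in\Sigma_i\cup\Sigma_j\cup\{\epsilon\}\cup\Sigma_i^r\cup\Sigma_j^r$, $e\in\Sigma_i\cup\Sigma_j$) and $\sigma_{a,w}$ (for $\sigma$ an event and $a$ an event or erasure symbol), all distinct from each other and from events. Let $E_i$ be the set of observable components of $Z$-states of $T_i$ and $A_i$ the set of action components of $W$-states of $T_i$. $G_i^T$ is the deterministic automaton with the same states as $T_i$, initial state the initial $Y$-state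 of $T_i$, marked states all $Y$-states, and transitions: (a) $y\xrightarrow{e}z$ for each transition $y\xrightarrow{e}z$ of $T_i$ out of a $Y$-state; (b) $z\xrightarrow{\theta_e}q$ for each transition $z\xrightarrow{\theta}q$ of $T_i$ out of a $Z$-state $z$ with observable component $e$; (c) $w\xrightarrow{e_{a,w}}y$ for each transition $w\xrightarrow{e}y$ of $T_i$ out of a $W$-state $w$ with action component $a$; (d) a self-loop $y\xrightarrow{\alpha}y$ at every $Y$-state $y$ for every $\alpha\in\Sigma_j\setminus\Sigma_i$. Its alphabet is $\Sigma_{G_i^T}=\Sigma_i\cup(\Sigma_j\setminus\Sigma_i)\cup\{\theta_e\mid\theta\in\Sigma_i\cup\{\epsilon\}\cup\Sigma_i^r,\ e\in E_i\}\cup\{\sigma_{a,w}\mid\sigma\in\Sigma_i,\ a\in A_i\}\cup\{\beta_\alpha,\ \beta_{\alpha,w},\ \beta_{\alpha\to\epsilon,w}\mid\beta\in\Sigma_i\cap\Sigma_j,\ \alpha\in\Sigma_j\setminus\Sigma_i\}$. Renaming: $\rho$ maps each event $e$ to $e$, each $\theta_e$ to $\theta$, and each $\sigma_{a,w}$ to $\sigma$, extended letter-by-letter to strings. *)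

theory Defs
  imports Main
begin

text \<open>Transition labels are of type 'e option: None is the unobservable symbol tau,
  Some a is the observable event a.\<close>

record ('q, 'e) nfa =
  alph   :: "'e set"
  states :: "'q set"
  trans  :: "('q \<times> 'e option \<times> 'q) set"
  init   :: "'q set"

definition wf_nfa :: "('q, 'e) nfa \<Rightarrow> bool" where
  "wf_nfa G \<longleftrightarrow> finite (alph G) \<and> finite (states G) \<and> init G \<subseteq> states G \<and>
     (\<forall>p l q. (p, l, q) \<in> trans G \<longrightarrow>
        p \<in> states G \<and> q \<in> states G \<and> (l = None \<or> (\<exists>a \<in> alph G. l = Some a)))"

inductive nfa_run :: "('q, 'e) nfa \<Rightarrow> 'q \<Rightarrow> 'e list \<Rightarrow> 'q \<Rightarrow> bool" for G where
  run_nil:  "nfa_run G p [] p"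
| run_tau:  "(p, None, p') \<in> trans G \<Longrightarrow> nfa_run G p' w q \<Longrightarrow> nfa_run G p w q"
| run_ev:   "(p, Some a, p') \<in> trans G \<Longrightarrow> nfa_run G p' w q \<Longrightarrow> nfa_run G p (a # w) q"

definition UR :: "('q, 'e) nfa \<Rightarrow> 'q set \<Rightarrow> 'q set" where
  "UR G B = {q. \<exists>b \<in> B. nfa_run G b [] q}"

definition sync :: "('q1, 'e) nfa \<Rightarrow> ('q2, 'e) nfa \<Rightarrow> ('q1 \<times> 'q2, 'e) nfa" where
  "sync G1 G2 = \<lparr> alph = alph G1 \<union> alph G2,
     states = states G1 \<times> states G2,
     trans =
       {((p1, p2), Some a, (q1, q2)) | p1 p2 a q1 q2.
          a \<in> alph G1 \<inter> alph G2 \<and> (p1, Some a, q1) \<in> trans G1 \<and> (p2, Some a, q2) \<in> trans G2}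
     \<union> {((p1, p2), l, (q1, p2)) | p1 p2 l q1.
          (l = None \<or> (\<exists>a. l = Some a \<and> a \<in> alph G1 - alph G2)) \<and>
          (p1, l, q1) \<in> trans G1 \<and> p2 \<in> states G2}
     \<union> {((p1, p2), l, (p1, q2)) | p1 p2 l q2.
          (l = None \<or> (\<exists>a. l = Some a \<and> a \<in> alph G2 - alph G1)) \<and>
          (p2, l, q2) \<in> trans G2 \<and> p1 \<in> states G1},
     init = init G1 \<times> init G2 \<rparr>"

text \<open>A deterministic automaton over an alphabet: initial state and partial transition
  function (None = undefined). Only the part reachable from the initial state matters.\<close>
record ('x, 'e) dfa =
  dalph :: "'e set"
  dinit :: 'x
  dtr   :: "'x \<Rightarrow> 'e \<Rightarrow> 'x option"

definition det :: "('q, 'e) nfa \<Rightarrow> ('q set, 'e) dfa" where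
  "det G = \<lparr> dalph = alph G,
     dinit = UR G (init G),
     dtr = (\<lambda>X \<sigma>. let Y = UR G {y. \<exists>x \<in> X. (x, Some \<sigma>, y) \<in> trans G}
                 in if \<sigma> \<in> alph G \<and> Y \<noteq> {} then Some Y else None) \<rparr>"

text \<open>Desired observer: states X \<subseteq> QS deleted (the initial state UR(Q0) is kept; under the
  hypotheses of the theorem it is never a subset of the secret states).\<close>
definition det_d :: "('q, 'e) nfa \<Rightarrow> 'q set \<Rightarrow> ('q set, 'e) dfa" where
  "det_d G QS = \<lparr> dalph = alph G,
     dinit = UR G (init G),
     dtr = (\<lambda>X \<sigma>. if X \<subseteq> QS then None else
                 (case dtr (det G) X \<sigma> of
                    None \<Rightarrow> None
                  | Some Y \<Rightarrow> (if Y \<subseteq> QS then None else Some Y))) \<rparr>"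

text \<open>Action components: an event e or an erasure symbol e \<rightarrow> epsilon.\<close>
datatype 'e act = Act 'e | Era 'e

datatype 'e tlab = TEv 'e | TEps | TEra 'e

datatype ('x, 'y, 'e) tpo_state = YS 'x 'y | ZS 'x 'y 'e | WS 'x 'y "'e act"

inductive tpo_step :: "('x, 'e) dfa \<Rightarrow> ('y, 'e) dfa \<Rightarrow>
    ('x, 'y, 'e) tpo_state \<Rightarrow> 'e tlab \<Rightarrow> ('x, 'y, 'e) tpo_state \<Rightarrow> bool" for D F where
  t1: "dtr F f e \<noteq> None \<Longrightarrow> tpo_step D F (YS d f) (TEv e) (ZS d f e)"
| t2: "dtr D d \<theta> = Some d' \<Longrightarrow> tpo_step D F (ZS d f e) (TEv \<theta>) (ZS d' f e)"
| t3: "dtr D d e \<noteq> None \<Longrightarrow> dtr F f e \<noteq> None \<Longrightarrow> tpo_step D F (ZS d f e) TEps (WS d f (Act e))"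
| t4: "dtr F f e \<noteq> None \<Longrightarrow> tpo_step D F (ZS d f e) (TEra e) (WS d f (Era e))"
| t5: "dtr D d e = Some d' \<Longrightarrow> dtr F f e = Some f' \<Longrightarrow>
        tpo_step D F (WS d f (Act e)) (TEv e) (YS d' f')"
| t6: "dtr F f e = Some f' \<Longrightarrow> tpo_step D F (WS d f (Era e)) (TEv e) (YS d f')"

definition tpo_init :: "('x, 'e) dfa \<Rightarrow> ('y, 'e) dfa \<Rightarrow> ('x, 'y, 'e) tpo_state" where
  "tpo_init D F = YS (dinit D) (dinit F)"

inductive tpo_reach :: "('x, 'e) dfa \<Rightarrow> ('y, 'e) dfa \<Rightarrow> ('x, 'y, 'e) tpo_state \<Rightarrow> bool"
  for D F where
  r_init: "tpo_reach D F (tpo_init D F)"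
| r_step: "tpo_reach D F q \<Longrightarrow> tpo_step D F q l q' \<Longrightarrow> tpo_reach D F q'"

inductive tpo_run :: "('x, 'e) dfa \<Rightarrow> ('y, 'e) dfa \<Rightarrow>
    ('x, 'y, 'e) tpo_state \<Rightarrow> 'e tlab list \<Rightarrow> ('x, 'y, 'e) tpo_state \<Rightarrow> bool" for D F where
  tr_nil:  "tpo_run D F q [] q"
| tr_cons: "tpo_step D F q l q' \<Longrightarrow> tpo_run D F q' w r \<Longrightarrow> tpo_run D F q (l # w) r"

definition tpo_E :: "('x, 'e) dfa \<Rightarrow> ('y, 'e) dfa \<Rightarrow> 'e set" where
  "tpo_E D F = {e. \<exists>d f. tpo_reach D F (ZS d f e)}"

definition tpo_A :: "('x, 'e) dfa \<Rightarrow> ('y, 'e) dfa \<Rightarrow> 'e act set" where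
  "tpo_A D F = {a. \<exists>d f. tpo_reach D F (WS d f a)}"

text \<open>Symbols of the transformed automata: events e, formal symbols theta_e (GTh theta e,
  theta an event, epsilon or erasure symbol), and formal symbols sigma_{a,w} (GSa sigma a).\<close>
datatype 'e gsym = GEv 'e | GTh "'e tlab" 'e | GSa 'e "'e act"

definition transformed ::
  "('x, 'e) dfa \<Rightarrow> ('y, 'e) dfa \<Rightarrow> 'e set \<Rightarrow> 'e set \<Rightarrow> (('x, 'y, 'e) tpo_state, 'e gsym) nfa" where
  "transformed D F Si Sj = \<lparr>
     alph = GEv ` (Si \<union> (Sj - Si))
       \<union> {GTh \<theta> e | \<theta> e. (\<theta> \<in> TEv ` Si \<or> \<theta> = TEps \<or> \<theta> \<in> TEra ` Si) \<and> e \<in> tpo_E D F}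
       \<union> {GSa \<sigma> a | \<sigma> a. \<sigma> \<in> Si \<and> a \<in> tpo_A D F}
       \<union> {GTh (TEv \<beta>) \<alpha> | \<beta> \<alpha>. \<beta> \<in> Si \<inter> Sj \<and> \<alpha> \<in> Sj - Si}
       \<union> {GSa \<beta> (Act \<alpha>) | \<beta> \<alpha>. \<beta> \<in> Si \<inter> Sj \<and> \<alpha> \<in> Sj - Si}
       \<union> {GSa \<beta> (Era \<alpha>) | \<beta> \<alpha>. \<beta> \<in> Si \<inter> Sj \<and> \<alpha> \<in> Sj - Si},
     states = {q. tpo_reach D F q},
     trans =
         {(YS d f, Some (GEv e), z) | d f e z.
            tpo_reach D F (YS d f) \<and> tpo_step D F (YS d f) (TEv e) z}
       \<union> {(ZS d f e, Some (GTh \<theta> e), q) | d f e \<theta> q.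
            tpo_reach D F (ZS d f e) \<and> tpo_step D F (ZS d f e) \<theta> q}
       \<union> {(WS d f a, Some (GSa e a), y) | d f a e y.
            tpo_reach D F (WS d f a) \<and> tpo_step D F (WS d f a) (TEv e) y}
       \<union> {(YS d f, Some (GEv \<alpha>), YS d f) | d f \<alpha>.
            tpo_reach D F (YS d f) \<and> \<alpha> \<in> Sj - Si},
     init = {tpo_init D F} \<rparr>"

fun rho :: "'e gsym \<Rightarrow> 'e tlab" where
  "rho (GEv e) = TEv e"
| "rho (GTh \<theta> e) = \<theta>"
| "rho (GSa \<sigma> a) = TEv \<sigma>"

end

theory Submission
  imports Defs
begin

text \<open>A run of the composition of the transformed automata is simulated by the monolithic
  three-player observer through the map merge_tpo, which combines a state of T1 and a state of
  T2 componentwise by Cartesian products. The invariant is that both states are reachable in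
  their own observers and that they are in phase: for a shared event both components perform
  the Y-Z-W round together, while during the round of an event private to one component the
  other one waits in a Y-state. Every simulated step rests on the observers of G1 || G2 acting
  componentwise on products of observer states, X1 \<times> X2 moving to Y1 \<times> Y2 on a shared event
  and to Y1 \<times> X2 on an event private to G1: the unobservable reach of a product is the
  product of the unobservable reaches, and a product lies inside the secret states of the
  composition exactly when one of its factors lies inside its own secret states.\<close>

section \<open>Unobservable reach in a synchronous composition\<close>

lemma nfa_run_states:
  assumes "nfa_run G p w q" "wf_nfa G" "p \<in> states G"
  shows "q \<in> states G"
  using assms by induction (auto simp: wf_nfa_def)

lemma nfa_run_append:
  assumes "nfa_run G p u q" "nfa_run G q v r"
  shows "nfa_run G p (u @ v) r"
  using assms by induction (auto intro: nfa_run.intros)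

lemma UR_UR [simp]: "UR G (UR G B) = UR G B"
proof
  show "UR G (UR G B) \<subseteq> UR G B"
    unfolding UR_def using nfa_run_append[where u = "[]" and v = "[]" and G = G] by fastforce
  show "UR G B \<subseteq> UR G (UR G B)"
    unfolding UR_def by (auto intro: nfa_run.run_nil)
qed

lemma UR_subset_states: "wf_nfa G \<Longrightarrow> B \<subseteq> states G \<Longrightarrow> UR G B \<subseteq> states G"
  unfolding UR_def using nfa_run_states[of G _ "[]"] by auto

lemma sync_silent_run_projections:
  assumes "nfa_run (sync G1 G2) p w q" "w = []"
  shows "nfa_run G1 (fst p) [] (fst q) \<and> nfa_run G2 (snd p) [] (snd q)"
  using assms
proof induction
  case (run_tau p p' w q)
  then show ?case
    unfolding sync_def by (auto intro: nfa_run.intros)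
qed (auto intro: nfa_run.run_nil)

lemma sync_silent_run_left:
  assumes "nfa_run G1 p1 w q1" "w = []" "p2 \<in> states G2"
  shows "nfa_run (sync G1 G2) (p1, p2) [] (q1, p2)"
  using assms
proof induction
  case (run_tau p p' w q)
  then have "((p, p2), None, (p', p2)) \<in> trans (sync G1 G2)"
    by (auto simp: sync_def)
  with run_tau show ?case
    by (auto intro: nfa_run.run_tau)
qed (auto intro: nfa_run.run_nil)

lemma sync_silent_run_right:
  assumes "nfa_run G2 p2 w q2" "w = []" "p1 \<in> states G1"
  shows "nfa_run (sync G1 G2) (p1, p2) [] (p1, q2)"
  using assms
proof induction
  case (run_tau p p' w q)
  then have "((p1, p), None, (p1, p')) \<in> trans (sync G1 G2)"
    by (auto simp: sync_def)
  with run_tau show ?case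
    by (auto intro: nfa_run.run_tau)
qed (auto intro: nfa_run.run_nil)

lemma UR_sync:
  assumes "wf_nfa G1" "A \<subseteq> states G1" "B \<subseteq> states G2"
  shows "UR (sync G1 G2) (A \<times> B) = UR G1 A \<times> UR G2 B"
proof
  show "UR (sync G1 G2) (A \<times> B) \<subseteq> UR G1 A \<times> UR G2 B"
    unfolding UR_def using sync_silent_run_projections by fastforce
  show "UR G1 A \<times> UR G2 B \<subseteq> UR (sync G1 G2) (A \<times> B)"
  proof clarify
    fix a b assume "a \<in> UR G1 A" "b \<in> UR G2 B"
    then obtain a0 b0 where a0: "a0 \<in> A" "nfa_run G1 a0 [] a"
      and b0: "b0 \<in> B" "nfa_run G2 b0 [] b"
      unfolding UR_def by blast
    have "a \<in> states G1"
      using nfa_run_states[OF a0(2) assms(1)] a0(1) assms(2) by blast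
    then have "nfa_run (sync G1 G2) (a0, b0) [] (a, b)"
      using nfa_run_append[OF sync_silent_run_left[OF a0(2)] sync_silent_run_right[OF b0(2)]]
        a0(1) b0(1) assms(2,3) by auto
    with a0(1) b0(1) show "(a, b) \<in> UR (sync G1 G2) (A \<times> B)"
      unfolding UR_def by blast
  qed
qed

section \<open>Observers of a synchronous composition\<close>

definition post :: "('q, 'e) nfa \<Rightarrow> 'q set \<Rightarrow> 'e \<Rightarrow> 'q set" where
  "post G X \<sigma> = {y. \<exists>x \<in> X. (x, Some \<sigma>, y) \<in> trans G}"

lemma post_subset_states: "wf_nfa G \<Longrightarrow> post G X \<sigma> \<subseteq> states G"
  unfolding post_def wf_nfa_def by blast

lemma post_sync_shared:
  "\<sigma> \<in> alph G1 \<Longrightarrow> \<sigma> \<in> alph G2 \<Longrightarrow> post (sync G1 G2) (A \<times> B) \<sigma> = post G1 A \<sigma> \<times> post G2 B \<sigma>"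
  unfolding post_def sync_def by auto

lemma post_sync_left:
  "\<sigma> \<in> alph G1 \<Longrightarrow> \<sigma> \<notin> alph G2 \<Longrightarrow> B \<subseteq> states G2 \<Longrightarrow> post (sync G1 G2) (A \<times> B) \<sigma> = post G1 A \<sigma> \<times> B"
  unfolding post_def sync_def by (auto 4 4)

lemma post_sync_right:
  "\<sigma> \<in> alph G2 \<Longrightarrow> \<sigma> \<notin> alph G1 \<Longrightarrow> A \<subseteq> states G1 \<Longrightarrow> post (sync G1 G2) (A \<times> B) \<sigma> = A \<times> post G2 B \<sigma>"
  unfolding post_def sync_def by (auto 4 4)

lemma det_step_iff:
  "dtr (det G) X \<sigma> = Some Y \<longleftrightarrow> \<sigma> \<in> alph G \<and> Y = UR G (post G X \<sigma>) \<and> Y \<noteq> {}"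
  unfolding det_def post_def by (auto simp: Let_def)

lemma det_d_step_iff:
  "dtr (det_d G QS) X \<sigma> = Some Y \<longleftrightarrow> \<not> X \<subseteq> QS \<and> dtr (det G) X \<sigma> = Some Y \<and> \<not> Y \<subseteq> QS"
  unfolding det_d_def by (auto split: option.splits)

definition observer_state :: "('q, 'e) nfa \<Rightarrow> 'q set \<Rightarrow> bool" where
  "observer_state G X \<longleftrightarrow> X \<subseteq> states G \<and> UR G X = X \<and> X \<noteq> {}"

lemma det_step_observer_state:
  "dtr (det G) X \<sigma> = Some Y \<Longrightarrow> wf_nfa G \<Longrightarrow> observer_state G Y"
  unfolding observer_state_def det_step_iff using UR_subset_states post_subset_states UR_UR by metis

lemma det_sync_step_shared:
  assumes "wf_nfa G1" "wf_nfa G2" "dtr (det G1) X1 \<sigma> = Some Y1" "dtr (det G2) X2 \<sigma> = Some Y2"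
  shows "dtr (det (sync G1 G2)) (X1 \<times> X2) \<sigma> = Some (Y1 \<times> Y2)"
  using assms post_subset_states[OF assms(1)] post_subset_states[OF assms(2)]
  by (auto simp: det_step_iff post_sync_shared UR_sync) (simp add: sync_def)

lemma det_sync_step_left:
  assumes "wf_nfa G1" "dtr (det G1) X1 \<sigma> = Some Y1" "\<sigma> \<notin> alph G2" "observer_state G2 X2"
  shows "dtr (det (sync G1 G2)) (X1 \<times> X2) \<sigma> = Some (Y1 \<times> X2)"
  using assms post_subset_states[OF assms(1)]
  by (auto simp: det_step_iff post_sync_left UR_sync observer_state_def) (simp add: sync_def)

lemma det_sync_step_right:
  assumes "wf_nfa G1" "wf_nfa G2" "dtr (det G2) X2 \<sigma> = Some Y2" "\<sigma> \<notin> alph G1" "observer_state G1 X1"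
  shows "dtr (det (sync G1 G2)) (X1 \<times> X2) \<sigma> = Some (X1 \<times> Y2)"
  using assms post_subset_states[OF assms(2)]
  by (auto simp: det_step_iff post_sync_right UR_sync observer_state_def) (simp add: sync_def)

lemma det_step_alph: "dtr (det G) X \<sigma> = Some Y \<Longrightarrow> \<sigma> \<in> alph G"
  by (simp add: det_step_iff)

lemma det_d_step_alph: "dtr (det_d G QS) X \<sigma> = Some Y \<Longrightarrow> \<sigma> \<in> alph G"
  by (simp add: det_d_step_iff det_step_iff)

definition desired_observer_state :: "('q, 'e) nfa \<Rightarrow> 'q set \<Rightarrow> 'q set \<Rightarrow> bool" where
  "desired_observer_state G QS X \<longleftrightarrow> observer_state G X \<and> \<not> X \<subseteq> QS"

lemma det_d_step_desired_observer_state: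
  "dtr (det_d G QS) X \<sigma> = Some Y \<Longrightarrow> wf_nfa G \<Longrightarrow> desired_observer_state G QS Y"
  unfolding desired_observer_state_def det_d_step_iff using det_step_observer_state by metis

lemma times_subset_secret_iff:
  "A \<times> B \<subseteq> {(x1, x2). x1 \<in> QS1 \<or> x2 \<in> QS2} \<longleftrightarrow> A \<subseteq> QS1 \<or> B \<subseteq> QS2"
  by auto

lemma det_d_sync_step_shared:
  assumes "wf_nfa G1" "wf_nfa G2"
    and "dtr (det_d G1 QS1) X1 \<sigma> = Some Y1" "dtr (det_d G2 QS2) X2 \<sigma> = Some Y2"
  shows "dtr (det_d (sync G1 G2) {(x1, x2). x1 \<in> QS1 \<or> x2 \<in> QS2}) (X1 \<times> X2) \<sigma> = Some (Y1 \<times> Y2)"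
  using assms det_sync_step_shared[OF assms(1,2)]
  by (simp add: det_d_step_iff times_subset_secret_iff desired_observer_state_def)

lemma det_d_sync_step_left:
  assumes "wf_nfa G1" "dtr (det_d G1 QS1) X1 \<sigma> = Some Y1" "\<sigma> \<notin> alph G2"
    and "desired_observer_state G2 QS2 X2"
  shows "dtr (det_d (sync G1 G2) {(x1, x2). x1 \<in> QS1 \<or> x2 \<in> QS2}) (X1 \<times> X2) \<sigma> = Some (Y1 \<times> X2)"
  using assms det_sync_step_left[OF assms(1), of X1 \<sigma> Y1 G2 X2]
  by (simp add: det_d_step_iff times_subset_secret_iff desired_observer_state_def)

lemma det_d_sync_step_right:
  assumes "wf_nfa G1" "wf_nfa G2" "dtr (det_d G2 QS2) X2 \<sigma> = Some Y2" "\<sigma> \<notin> alph G1"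
    and "desired_observer_state G1 QS1 X1"
  shows "dtr (det_d (sync G1 G2) {(x1, x2). x1 \<in> QS1 \<or> x2 \<in> QS2}) (X1 \<times> X2) \<sigma> = Some (X1 \<times> Y2)"
  using assms det_sync_step_right[OF assms(1,2), of X2 \<sigma> Y2 X1]
  by (simp add: det_d_step_iff times_subset_secret_iff desired_observer_state_def)

section \<open>Three-player observers and transformed automata\<close>

fun tpo_dstate :: "('x, 'y, 'e) tpo_state \<Rightarrow> 'x" where
  "tpo_dstate (YS d f) = d"
| "tpo_dstate (ZS d f e) = d"
| "tpo_dstate (WS d f a) = d"

fun tpo_fstate :: "('x, 'y, 'e) tpo_state \<Rightarrow> 'y" where
  "tpo_fstate (YS d f) = f"
| "tpo_fstate (ZS d f e) = f"
| "tpo_fstate (WS d f a) = f"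

fun act_event :: "'e act \<Rightarrow> 'e" where
  "act_event (Act e) = e"
| "act_event (Era e) = e"

lemma tpo_step_YS_iff:
  "tpo_step D F (YS d f) l q \<longleftrightarrow> (\<exists>e. l = TEv e \<and> q = ZS d f e \<and> dtr F f e \<noteq> None)"
  by (auto elim: tpo_step.cases intro: tpo_step.intros)

lemma tpo_step_ZS_cases:
  assumes "tpo_step D F (ZS d f e) l q"
  obtains (ev) \<theta> d' where "l = TEv \<theta>" "dtr D d \<theta> = Some d'" "q = ZS d' f e"
    | (eps) d' f' where "l = TEps" "q = WS d f (Act e)" "dtr D d e = Some d'" "dtr F f e = Some f'"
    | (era) f' where "l = TEra e" "q = WS d f (Era e)" "dtr F f e = Some f'"
  using assms by cases auto

lemma tpo_step_WS_cases:
  assumes "tpo_step D F (WS d f a) l q"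
  obtains (act) e d' f'
      where "a = Act e" "l = TEv e" "dtr D d e = Some d'" "dtr F f e = Some f'" "q = YS d' f'"
    | (era) e f' where "a = Era e" "l = TEv e" "dtr F f e = Some f'" "q = YS d f'"
  using assms by cases auto

lemma tpo_reach_observer_states:
  assumes "tpo_reach (det_d G QS) (det G) q" "wf_nfa G" "\<not> UR G (init G) \<subseteq> QS"
  shows "desired_observer_state G QS (tpo_dstate q) \<and> observer_state G (tpo_fstate q)"
  using assms(1)
proof induction
  case r_init
  have "UR G (init G) \<subseteq> states G"
    using assms(2) UR_subset_states unfolding wf_nfa_def by blast
  with assms(3) show ?case
    by (auto simp: tpo_init_def det_d_def det_def desired_observer_state_def observer_state_def)
next
  case (r_step q l q')
  from r_step.hyps(2) show ?case
    using r_step.IH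
    by cases (auto dest: det_d_step_desired_observer_state[OF _ assms(2)]
        det_step_observer_state[OF _ assms(2)])
qed

lemma GEv_in_transformed_alph_iff: "GEv e \<in> alph (transformed D F Si Sj) \<longleftrightarrow> e \<in> Si \<union> Sj"
  unfolding transformed_def by auto

lemma GTh_in_transformed_alph:
  "\<theta> \<in> TEv ` Si \<or> \<theta> = TEps \<or> \<theta> \<in> TEra ` Si \<Longrightarrow> tpo_reach D F (ZS d f e) \<Longrightarrow>
   GTh \<theta> e \<in> alph (transformed D F Si Sj)"
  unfolding transformed_def tpo_E_def by auto

lemma GTh_private_in_transformed_alph:
  "\<beta> \<in> Si \<inter> Sj \<Longrightarrow> \<alpha> \<in> Sj - Si \<Longrightarrow> GTh (TEv \<beta>) \<alpha> \<in> alph (transformed D F Si Sj)"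
  unfolding transformed_def by auto

lemma GSa_in_transformed_alph:
  "\<sigma> \<in> Si \<Longrightarrow> tpo_reach D F (WS d f a) \<Longrightarrow> GSa \<sigma> a \<in> alph (transformed D F Si Sj)"
  unfolding transformed_def tpo_A_def by auto

lemma transformed_no_silent_trans: "(q, None, q') \<notin> trans (transformed D F Si Sj)"
  unfolding transformed_def by auto

lemma transformed_trans_YS_iff:
  "(YS d f, Some x, q') \<in> trans (transformed D F Si Sj) \<longleftrightarrow>
     tpo_reach D F (YS d f) \<and>
     (\<exists>e. x = GEv e \<and> (tpo_step D F (YS d f) (TEv e) q' \<or> q' = YS d f \<and> e \<in> Sj - Si))"
  unfolding transformed_def by auto

lemma transformed_trans_ZS_iff:
  "(ZS d f e, Some x, q') \<in> trans (transformed D F Si Sj) \<longleftrightarrow>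
     tpo_reach D F (ZS d f e) \<and> (\<exists>\<theta>. x = GTh \<theta> e \<and> tpo_step D F (ZS d f e) \<theta> q')"
  unfolding transformed_def by auto

lemma transformed_trans_WS_iff:
  "(WS d f a, Some x, q') \<in> trans (transformed D F Si Sj) \<longleftrightarrow>
     tpo_reach D F (WS d f a) \<and> (\<exists>e. x = GSa e a \<and> tpo_step D F (WS d f a) (TEv e) q')"
  unfolding transformed_def by auto

lemma transformed_trans_reach:
  "(q, Some x, q') \<in> trans (transformed D F Si Sj) \<Longrightarrow> tpo_reach D F q'"
  unfolding transformed_def by (auto intro: tpo_reach.r_step)

lemma sync_trans_Some_iff:
  "((p1, p2), Some x, (q1, q2)) \<in> trans (sync A B) \<longleftrightarrow>
     x \<in> alph A \<and> x \<in> alph B \<and> (p1, Some x, q1) \<in> trans A \<and> (p2, Some x, q2) \<in> trans B \<or>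
     x \<in> alph A \<and> x \<notin> alph B \<and> (p1, Some x, q1) \<in> trans A \<and> q2 = p2 \<and> p2 \<in> states B \<or>
     x \<in> alph B \<and> x \<notin> alph A \<and> (p2, Some x, q2) \<in> trans B \<and> q1 = p1 \<and> p1 \<in> states A"
  unfolding sync_def by auto

lemma sync_silent_trans:
  "(p, None, q) \<in> trans (sync A B) \<Longrightarrow>
   (fst p, None, fst q) \<in> trans A \<or> (snd p, None, snd q) \<in> trans B"
  unfolding sync_def by auto

section \<open>Simulation of the composed transformed automata\<close>

fun in_phase :: "'e set \<Rightarrow> 'e set \<Rightarrow> ('x, 'y, 'e) tpo_state \<Rightarrow> ('x', 'y', 'e) tpo_state \<Rightarrow> bool" where
  "in_phase S1 S2 (YS _ _) (YS _ _) = True"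
| "in_phase S1 S2 (ZS _ _ e) (ZS _ _ e') = (e = e' \<and> e \<in> S1 \<and> e \<in> S2)"
| "in_phase S1 S2 (ZS _ _ e) (YS _ _) = (e \<in> S1 \<and> e \<notin> S2)"
| "in_phase S1 S2 (YS _ _) (ZS _ _ e) = (e \<in> S2 \<and> e \<notin> S1)"
| "in_phase S1 S2 (WS _ _ a) (WS _ _ a') = (a = a' \<and> act_event a \<in> S1 \<and> act_event a \<in> S2)"
| "in_phase S1 S2 (WS _ _ a) (YS _ _) = (act_event a \<in> S1 \<and> act_event a \<notin> S2)"
| "in_phase S1 S2 (YS _ _) (WS _ _ a) = (act_event a \<in> S2 \<and> act_event a \<notin> S1)"
| "in_phase S1 S2 _ _ = False"

fun merge_tpo :: "('a set, 'b set, 'e) tpo_state \<Rightarrow> ('c set, 'd set, 'e) tpo_state \<Rightarrow>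
    (('a \<times> 'c) set, ('b \<times> 'd) set, 'e) tpo_state" where
  "merge_tpo (YS d1 f1) q2 = (case q2 of
       YS d2 f2 \<Rightarrow> YS (d1 \<times> d2) (f1 \<times> f2)
     | ZS d2 f2 e \<Rightarrow> ZS (d1 \<times> d2) (f1 \<times> f2) e
     | WS d2 f2 a \<Rightarrow> WS (d1 \<times> d2) (f1 \<times> f2) a)"
| "merge_tpo (ZS d1 f1 e) q2 = ZS (d1 \<times> tpo_dstate q2) (f1 \<times> tpo_fstate q2) e"
| "merge_tpo (WS d1 f1 a) q2 = WS (d1 \<times> tpo_dstate q2) (f1 \<times> tpo_fstate q2) a"

text \<open>The rules of tpo_step with definedness premises stated as equations, so that they
  chain with the product lemmas for the observers.\<close>

lemma tpo_step_Some_intros: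
  "dtr F f e = Some f' \<Longrightarrow> tpo_step D F (YS d f) (TEv e) (ZS d f e)"
  "dtr D d \<theta> = Some d' \<Longrightarrow> tpo_step D F (ZS d f e) (TEv \<theta>) (ZS d' f e)"
  "dtr D d e = Some d' \<Longrightarrow> dtr F f e = Some f' \<Longrightarrow> tpo_step D F (ZS d f e) TEps (WS d f (Act e))"
  "dtr F f e = Some f' \<Longrightarrow> tpo_step D F (ZS d f e) (TEra e) (WS d f (Era e))"
  "dtr D d e = Some d' \<Longrightarrow> dtr F f e = Some f' \<Longrightarrow> tpo_step D F (WS d f (Act e)) (TEv e) (YS d' f')"
  "dtr F f e = Some f' \<Longrightarrow> tpo_step D F (WS d f (Era e)) (TEv e) (YS d f')"
  by (auto intro: tpo_step.intros)

locale observer_composition =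
  fixes G1 :: "('q1, 'e) nfa" and G2 :: "('q2, 'e) nfa"
    and QS1 :: "'q1 set" and QS2 :: "'q2 set"
  assumes wf1: "wf_nfa G1" and wf2: "wf_nfa G2"
    and nsec1: "\<not> UR G1 (init G1) \<subseteq> QS1"
    and nsec2: "\<not> UR G2 (init G2) \<subseteq> QS2"
begin

abbreviation "D1 \<equiv> det_d G1 QS1"
abbreviation "F1 \<equiv> det G1"
abbreviation "D2 \<equiv> det_d G2 QS2"
abbreviation "F2 \<equiv> det G2"
abbreviation "T1 \<equiv> transformed D1 F1 (alph G1) (alph G2)"
abbreviation "T2 \<equiv> transformed D2 F2 (alph G2) (alph G1)"
abbreviation "D \<equiv> det_d (sync G1 G2) {(x1, x2). x1 \<in> QS1 \<or> x2 \<in> QS2}"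
abbreviation "F \<equiv> det (sync G1 G2)"

definition paired ::
    "('q1 set, 'q1 set, 'e) tpo_state \<Rightarrow> ('q2 set, 'q2 set, 'e) tpo_state \<Rightarrow> bool" where
  "paired q1 q2 \<longleftrightarrow>
     tpo_reach D1 F1 q1 \<and> tpo_reach D2 F2 q2 \<and> in_phase (alph G1) (alph G2) q1 q2"

lemmas reach1_observer_states = tpo_reach_observer_states[OF _ wf1 nsec1]
lemmas reach2_observer_states = tpo_reach_observer_states[OF _ wf2 nsec2]

lemmas det_sync_steps =
  det_sync_step_shared[OF wf1 wf2] det_sync_step_left[OF wf1] det_sync_step_right[OF wf1 wf2]
lemmas det_d_sync_steps =
  det_d_sync_step_shared[OF wf1 wf2] det_d_sync_step_left[OF wf1] det_d_sync_step_right[OF wf1 wf2]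

lemma sync_transformed_trans_reach:
  assumes "((q1, q2), Some x, (q1', q2')) \<in> trans (sync T1 T2)"
    and "tpo_reach D1 F1 q1" "tpo_reach D2 F2 q2"
  shows "tpo_reach D1 F1 q1' \<and> tpo_reach D2 F2 q2'"
  using assms transformed_trans_reach unfolding sync_trans_Some_iff by metis

lemma merge_tpo_step_YY:
  assumes r1: "tpo_reach D1 F1 (YS d1 f1)" and r2: "tpo_reach D2 F2 (YS d2 f2)"
    and tr: "((YS d1 f1, YS d2 f2), Some x, (q1', q2')) \<in> trans (sync T1 T2)"
  shows "in_phase (alph G1) (alph G2) q1' q2' \<and>
    tpo_step D F (YS (d1 \<times> d2) (f1 \<times> f2)) (rho x) (merge_tpo q1' q2')"
  using tr reach1_observer_states[OF r1] reach2_observer_states[OF r2]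
  unfolding sync_trans_Some_iff transformed_trans_YS_iff tpo_step_YS_iff
  by (auto simp: GEv_in_transformed_alph_iff dest: det_step_alph) (blast intro: det_sync_steps)+

lemma merge_tpo_step_ZZ:
  assumes r1: "tpo_reach D1 F1 (ZS d1 f1 e)" and r2: "tpo_reach D2 F2 (ZS d2 f2 e)"
    and e: "e \<in> alph G1" "e \<in> alph G2"
    and tr: "((ZS d1 f1 e, ZS d2 f2 e), Some x, (q1', q2')) \<in> trans (sync T1 T2)"
  shows "in_phase (alph G1) (alph G2) q1' q2' \<and>
    tpo_step D F (ZS (d1 \<times> d2) (f1 \<times> f2) e) (rho x) (merge_tpo q1' q2')"
proof -
  note obs = reach1_observer_states[OF r1] reach2_observer_states[OF r2]
  from tr consider
      (both) \<theta> where "x = GTh \<theta> e"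
        "tpo_step D1 F1 (ZS d1 f1 e) \<theta> q1'" "tpo_step D2 F2 (ZS d2 f2 e) \<theta> q2'"
    | (left) \<theta> where "x = GTh \<theta> e" "x \<notin> alph T2"
        "tpo_step D1 F1 (ZS d1 f1 e) \<theta> q1'" "q2' = ZS d2 f2 e"
    | (right) \<theta> where "x = GTh \<theta> e" "x \<notin> alph T1"
        "tpo_step D2 F2 (ZS d2 f2 e) \<theta> q2'" "q1' = ZS d1 f1 e"
    unfolding sync_trans_Some_iff transformed_trans_ZS_iff by blast
  then show ?thesis
  proof cases
    case both
    from both(2,3) show ?thesis
      using both(1) e by (elim tpo_step_ZS_cases)
        (auto intro: tpo_step_Some_intros det_sync_steps det_d_sync_steps dest: det_d_step_alph)
  next
    \<comment> \<open>Epsilon, erasure and shared events are also symbols of T2, so a move of T1 alone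
      inside a shared round is an event private to G1.\<close>
    case left
    then obtain \<beta> d1' where \<beta>: "\<theta> = TEv \<beta>" "dtr D1 d1 \<beta> = Some d1'" "q1' = ZS d1' f1 e"
      using e GTh_in_transformed_alph[OF _ r2] by (auto elim: tpo_step_ZS_cases)
    with left have "\<beta> \<notin> alph G2"
      using GTh_in_transformed_alph[OF _ r2] by auto
    with left \<beta> obs e show ?thesis
      by (auto intro: tpo_step_Some_intros det_d_sync_steps)
  next
    case right
    then obtain \<beta> d2' where \<beta>: "\<theta> = TEv \<beta>" "dtr D2 d2 \<beta> = Some d2'" "q2' = ZS d2' f2 e"
      using e GTh_in_transformed_alph[OF _ r1] by (auto elim: tpo_step_ZS_cases)
    with right have "\<beta> \<notin> alph G1"
      using GTh_in_transformed_alph[OF _ r1] by auto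
    with right \<beta> obs e show ?thesis
      by (auto intro: tpo_step_Some_intros det_d_sync_steps)
  qed
qed

lemma merge_tpo_step_ZY:
  assumes r1: "tpo_reach D1 F1 (ZS d1 f1 e)" and r2: "tpo_reach D2 F2 (YS d2 f2)"
    and e: "e \<in> alph G1" "e \<notin> alph G2"
    and tr: "((ZS d1 f1 e, YS d2 f2), Some x, (q1', q2')) \<in> trans (sync T1 T2)"
  shows "in_phase (alph G1) (alph G2) q1' q2' \<and>
    tpo_step D F (ZS (d1 \<times> d2) (f1 \<times> f2) e) (rho x) (merge_tpo q1' q2')"
proof -
  note obs = reach1_observer_states[OF r1] reach2_observer_states[OF r2]
  from tr obtain \<theta> where x: "x = GTh \<theta> e" "x \<notin> alph T2" and q2': "q2' = YS d2 f2"
    and step1: "tpo_step D1 F1 (ZS d1 f1 e) \<theta> q1'"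
    unfolding sync_trans_Some_iff transformed_trans_ZS_iff transformed_trans_YS_iff tpo_step_YS_iff
    by (auto simp: GEv_in_transformed_alph_iff dest: det_step_alph)
  from step1 show ?thesis
  proof (cases rule: tpo_step_ZS_cases)
    case (ev \<beta> d1')
    \<comment> \<open>A shared event inside a round private to G1 is a symbol of T2 by construction, so it
      cannot be taken by T1 alone.\<close>
    have "\<beta> \<in> alph G1"
      using ev(2) by (rule det_d_step_alph)
    with x ev(1) e have "\<beta> \<notin> alph G2"
      using GTh_private_in_transformed_alph[of \<beta> "alph G2" "alph G1" e] by auto
    with ev x q2' e obs show ?thesis
      by (auto intro: tpo_step.t2 det_d_sync_steps)
  qed (use x q2' e obs in \<open>auto intro: tpo_step_Some_intros det_sync_steps det_d_sync_steps\<close>)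
qed

lemma merge_tpo_step_YZ:
  assumes r1: "tpo_reach D1 F1 (YS d1 f1)" and r2: "tpo_reach D2 F2 (ZS d2 f2 e)"
    and e: "e \<in> alph G2" "e \<notin> alph G1"
    and tr: "((YS d1 f1, ZS d2 f2 e), Some x, (q1', q2')) \<in> trans (sync T1 T2)"
  shows "in_phase (alph G1) (alph G2) q1' q2' \<and>
    tpo_step D F (ZS (d1 \<times> d2) (f1 \<times> f2) e) (rho x) (merge_tpo q1' q2')"
proof -
  note obs = reach1_observer_states[OF r1] reach2_observer_states[OF r2]
  from tr obtain \<theta> where x: "x = GTh \<theta> e" "x \<notin> alph T1" and q1': "q1' = YS d1 f1"
    and step2: "tpo_step D2 F2 (ZS d2 f2 e) \<theta> q2'"
    unfolding sync_trans_Some_iff transformed_trans_ZS_iff transformed_trans_YS_iff tpo_step_YS_iff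
    by (auto simp: GEv_in_transformed_alph_iff dest: det_step_alph)
  from step2 show ?thesis
  proof (cases rule: tpo_step_ZS_cases)
    case (ev \<beta> d2')
    have "\<beta> \<in> alph G2"
      using ev(2) by (rule det_d_step_alph)
    with x ev(1) e have "\<beta> \<notin> alph G1"
      using GTh_private_in_transformed_alph[of \<beta> "alph G1" "alph G2" e] by auto
    with ev x q1' e obs show ?thesis
      by (auto intro: tpo_step.t2 det_d_sync_steps)
  qed (use x q1' e obs in \<open>auto intro: tpo_step_Some_intros det_sync_steps det_d_sync_steps\<close>)
qed

lemma merge_tpo_step_WW:
  assumes r1: "tpo_reach D1 F1 (WS d1 f1 a)" and r2: "tpo_reach D2 F2 (WS d2 f2 a)"
    and e: "act_event a \<in> alph G1" "act_event a \<in> alph G2"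
    and tr: "((WS d1 f1 a, WS d2 f2 a), Some x, (q1', q2')) \<in> trans (sync T1 T2)"
  shows "in_phase (alph G1) (alph G2) q1' q2' \<and>
    tpo_step D F (WS (d1 \<times> d2) (f1 \<times> f2) a) (rho x) (merge_tpo q1' q2')"
proof -
  \<comment> \<open>The event of a shared W-round is shared, so neither side can move alone.\<close>
  have event: "\<sigma> = act_event a" if "tpo_step D' F' (WS d f a) (TEv \<sigma>) q" for D' F' d f q \<sigma>
    using that by (auto elim: tpo_step_WS_cases)
  from tr consider
      (both) \<sigma> where "x = GSa \<sigma> a"
        "tpo_step D1 F1 (WS d1 f1 a) (TEv \<sigma>) q1'" "tpo_step D2 F2 (WS d2 f2 a) (TEv \<sigma>) q2'"
    | (left) \<sigma> where "x = GSa \<sigma> a" "tpo_step D1 F1 (WS d1 f1 a) (TEv \<sigma>) q1'" "x \<notin> alph T2"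
    | (right) \<sigma> where "x = GSa \<sigma> a" "tpo_step D2 F2 (WS d2 f2 a) (TEv \<sigma>) q2'" "x \<notin> alph T1"
    unfolding sync_trans_Some_iff transformed_trans_WS_iff by blast
  then show ?thesis
  proof cases
    case both
    from both(2,3) show ?thesis
      using both(1) by (elim tpo_step_WS_cases)
        (auto intro: tpo_step_Some_intros det_sync_steps det_d_sync_steps)
  next
    case left
    then show ?thesis
      using e GSa_in_transformed_alph[OF _ r2] event[OF left(2)] by auto
  next
    case right
    then show ?thesis
      using e GSa_in_transformed_alph[OF _ r1] event[OF right(2)] by auto
  qed
qed

lemma merge_tpo_step_WY:
  assumes r1: "tpo_reach D1 F1 (WS d1 f1 a)" and r2: "tpo_reach D2 F2 (YS d2 f2)"
    and e: "act_event a \<in> alph G1" "act_event a \<notin> alph G2"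
    and tr: "((WS d1 f1 a, YS d2 f2), Some x, (q1', q2')) \<in> trans (sync T1 T2)"
  shows "in_phase (alph G1) (alph G2) q1' q2' \<and>
    tpo_step D F (WS (d1 \<times> d2) (f1 \<times> f2) a) (rho x) (merge_tpo q1' q2')"
proof -
  note obs = reach2_observer_states[OF r2]
  from tr obtain \<sigma> where x: "x = GSa \<sigma> a" and q2': "q2' = YS d2 f2"
    and step1: "tpo_step D1 F1 (WS d1 f1 a) (TEv \<sigma>) q1'"
    unfolding sync_trans_Some_iff transformed_trans_WS_iff transformed_trans_YS_iff tpo_step_YS_iff
    by (auto simp: GEv_in_transformed_alph_iff dest: det_step_alph)
  from step1 show ?thesis
    using x q2' e obs by (cases rule: tpo_step_WS_cases)
      (auto intro: tpo_step_Some_intros det_sync_steps det_d_sync_steps)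
qed

lemma merge_tpo_step_YW:
  assumes r1: "tpo_reach D1 F1 (YS d1 f1)" and r2: "tpo_reach D2 F2 (WS d2 f2 a)"
    and e: "act_event a \<in> alph G2" "act_event a \<notin> alph G1"
    and tr: "((YS d1 f1, WS d2 f2 a), Some x, (q1', q2')) \<in> trans (sync T1 T2)"
  shows "in_phase (alph G1) (alph G2) q1' q2' \<and>
    tpo_step D F (WS (d1 \<times> d2) (f1 \<times> f2) a) (rho x) (merge_tpo q1' q2')"
proof -
  note obs = reach1_observer_states[OF r1]
  from tr obtain \<sigma> where x: "x = GSa \<sigma> a" and q1': "q1' = YS d1 f1"
    and step2: "tpo_step D2 F2 (WS d2 f2 a) (TEv \<sigma>) q2'"
    unfolding sync_trans_Some_iff transformed_trans_WS_iff transformed_trans_YS_iff tpo_step_YS_iff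
    by (auto simp: GEv_in_transformed_alph_iff dest: det_step_alph)
  from step2 show ?thesis
    using x q1' e obs by (cases rule: tpo_step_WS_cases)
      (auto intro: tpo_step_Some_intros det_sync_steps det_d_sync_steps)
qed

lemma paired_step:
  assumes "paired q1 q2" and tr: "((q1, q2), Some x, (q1', q2')) \<in> trans (sync T1 T2)"
  shows "paired q1' q2' \<and> tpo_step D F (merge_tpo q1 q2) (rho x) (merge_tpo q1' q2')"
proof -
  from assms(1) have r1: "tpo_reach D1 F1 q1" and r2: "tpo_reach D2 F2 q2"
    and phase: "in_phase (alph G1) (alph G2) q1 q2"
    unfolding paired_def by auto
  have "in_phase (alph G1) (alph G2) q1' q2' \<and>
    tpo_step D F (merge_tpo q1 q2) (rho x) (merge_tpo q1' q2')"
    using r1 r2 phase tr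
    by (cases q1; cases q2) (auto dest: merge_tpo_step_YY merge_tpo_step_ZZ merge_tpo_step_ZY
        merge_tpo_step_YZ merge_tpo_step_WW merge_tpo_step_WY merge_tpo_step_YW)
  with r1 r2 tr show ?thesis
    unfolding paired_def using sync_transformed_trans_reach by blast
qed

lemma paired_run:
  assumes "nfa_run (sync T1 T2) p s q" "paired (fst p) (snd p)"
  shows "\<exists>r. tpo_run D F (merge_tpo (fst p) (snd p)) (map rho s) r"
  using assms
proof induction
  case (run_nil p)
  show ?case by (auto intro: tpo_run.tr_nil)
next
  case (run_tau p p' w q)
  then show ?case
    using sync_silent_trans transformed_no_silent_trans by metis
next
  case (run_ev p x p' w q)
  then show ?case
    using paired_step[of "fst p" "snd p" x "fst p'" "snd p'"] by (auto intro: tpo_run.tr_cons)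
qed

lemma paired_init: "paired (tpo_init D1 F1) (tpo_init D2 F2)"
  unfolding paired_def tpo_init_def by (auto intro: tpo_reach.r_init[unfolded tpo_init_def])

lemma merge_tpo_init: "merge_tpo (tpo_init D1 F1) (tpo_init D2 F2) = tpo_init D F"
proof -
  have "init G1 \<subseteq> states G1" "init G2 \<subseteq> states G2"
    using wf1 wf2 unfolding wf_nfa_def by auto
  moreover have "init (sync G1 G2) = init G1 \<times> init G2"
    by (simp add: sync_def)
  ultimately have "UR (sync G1 G2) (init (sync G1 G2)) = UR G1 (init G1) \<times> UR G2 (init G2)"
    using UR_sync[OF wf1] by simp
  then show ?thesis
    by (simp add: tpo_init_def det_d_def det_def)
qed

end

theorem theorem4:
  fixes G1 :: "('q1, 'e) nfa" and G2 :: "('q2, 'e) nfa"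
    and QS1 :: "'q1 set" and QS2 :: "'q2 set"
    and s :: "'e gsym list"
  assumes wf1: "wf_nfa G1" and wf2: "wf_nfa G2"
    and sec1: "QS1 \<subseteq> states G1" and sec2: "QS2 \<subseteq> states G2"
    and nsec1: "\<not> UR G1 (init G1) \<subseteq> QS1"
    and nsec2: "\<not> UR G2 (init G2) \<subseteq> QS2"
    and s_alph: "set s \<subseteq> alph (transformed (det_d G1 QS1) (det G1) (alph G1) (alph G2))
                          \<union> alph (transformed (det_d G2 QS2) (det G2) (alph G2) (alph G1))"
    and q0: "q0 \<in> init (sync (transformed (det_d G1 QS1) (det G1) (alph G1) (alph G2))
                              (transformed (det_d G2 QS2) (det G2) (alph G2) (alph G1)))"
    and run: "nfa_run (sync (transformed (det_d G1 QS1) (det G1) (alph G1) (alph G2))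
                            (transformed (det_d G2 QS2) (det G2) (alph G2) (alph G1))) q0 s q"
  shows "\<exists>r. tpo_run (det_d (sync G1 G2) {(x1, x2). x1 \<in> QS1 \<or> x2 \<in> QS2}) (det (sync G1 G2))
              (tpo_init (det_d (sync G1 G2) {(x1, x2). x1 \<in> QS1 \<or> x2 \<in> QS2}) (det (sync G1 G2)))
              (map rho s) r"
proof -
  interpret observer_composition G1 G2 QS1 QS2
    using wf1 wf2 nsec1 nsec2 by unfold_locales
  have "q0 = (tpo_init D1 F1, tpo_init D2 F2)"
    using q0 by (simp add: sync_def transformed_def)
  with run show ?thesis
    using paired_run paired_init merge_tpo_init by fastforce
qed

end
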